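(* Let $G$ be a group, $K$ a zero-sum-free semifield, and $V$ a representation of $G$ over $K$. Then $V$ is indecomposable if and only if $G$ acts transitively on the set of basis lines of $V$. In addition, any representation $V$ of $G$ over $K$ may be uniquely decomposed as a direct sum of indecomposable representations.
   Context: All semirings are commutative. A semifield is a semiring whose nonzero elements form a multiplicative group; it is zero-sum-free if $a+b=0$ implies $a=b=0$. A representation of $G$ over $K$ is a $K$-linear action of $G$ on a free module $K^n$; a subrepresentation is a $G$-stable submodule; $V$ is indecomposable if it cannot be written as a direct sum of nontrivial subrepresentations. A basis line of a free $K$-module is a submodule spanned by a single vector of a basis; the set of basis lines does not depend on the basis, and $G$ acts on it by $g\cdot\mathrm{span}(v)=\mathrm{span}(gv)$. *)

theory Defs
  imports "HOL-Algebra.Group" "HOL-Library.Function_Algebras"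
begin

definition semifield :: "'k::comm_semiring_1 itself \<Rightarrow> bool" where
  "semifield _ \<longleftrightarrow> (0::'k) \<noteq> 1 \<and> (\<forall>a::'k. a \<noteq> 0 \<longrightarrow> (\<exists>b. a * b = 1))"

definition zero_sum_free :: "'k::comm_semiring_1 itself \<Rightarrow> bool" where
  "zero_sum_free _ \<longleftrightarrow> (\<forall>a b::'k. a + b = 0 \<longrightarrow> a = 0 \<and> b = 0)"

text \<open>The free module K^n is modelled as functions 'n \<Rightarrow> 'k with 'n a finite type;
  addition and zero are pointwise.\<close>

definition smult_vec :: "'k::comm_semiring_1 \<Rightarrow> ('n \<Rightarrow> 'k) \<Rightarrow> ('n \<Rightarrow> 'k)" where
  "smult_vec c v = (\<lambda>i. c * v i)"

definition submodule :: "('n \<Rightarrow> 'k::comm_semiring_1) set \<Rightarrow> bool" where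
  "submodule W \<longleftrightarrow> 0 \<in> W \<and> (\<forall>u\<in>W. \<forall>v\<in>W. u + v \<in> W) \<and> (\<forall>c. \<forall>v\<in>W. smult_vec c v \<in> W)"

definition lin_map :: "(('n \<Rightarrow> 'k::comm_semiring_1) \<Rightarrow> ('n \<Rightarrow> 'k)) \<Rightarrow> bool" where
  "lin_map f \<longleftrightarrow> (\<forall>u v. f (u + v) = f u + f v) \<and> (\<forall>c v. f (smult_vec c v) = smult_vec c (f v))"

definition is_basis :: "('n \<Rightarrow> 'k::comm_semiring_1) set \<Rightarrow> ('n \<Rightarrow> 'k) set \<Rightarrow> bool" where
  "is_basis W B \<longleftrightarrow> finite B \<and> B \<subseteq> W \<and>
     (\<forall>w\<in>W. \<exists>!c. (\<forall>b. b \<notin> B \<longrightarrow> c b = 0) \<and> w = (\<Sum>b\<in>B. smult_vec (c b) b))"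

definition free_submodule :: "('n \<Rightarrow> 'k::comm_semiring_1) set \<Rightarrow> bool" where
  "free_submodule W \<longleftrightarrow> submodule W \<and> (\<exists>B. is_basis W B)"

definition line :: "('n \<Rightarrow> 'k::comm_semiring_1) \<Rightarrow> ('n \<Rightarrow> 'k) set" where
  "line v = {smult_vec c v | c. True}"

definition basis_lines :: "('n \<Rightarrow> 'k::comm_semiring_1) set set" where
  "basis_lines = {line b | b. \<exists>B. is_basis (UNIV :: ('n \<Rightarrow> 'k) set) B \<and> b \<in> B}"

definition representation ::
  "('g, 'm) monoid_scheme \<Rightarrow> ('g \<Rightarrow> ('n \<Rightarrow> 'k::comm_semiring_1) \<Rightarrow> ('n \<Rightarrow> 'k)) \<Rightarrow> bool" where
  "representation G \<rho> \<longleftrightarrow> group G \<and> (\<forall>g\<in>carrier G. lin_map (\<rho> g)) \<and> \<rho> \<one>\<^bsub>G\<^esub> = id \<and>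
     (\<forall>g\<in>carrier G. \<forall>h\<in>carrier G. \<rho> (g \<otimes>\<^bsub>G\<^esub> h) = \<rho> g \<circ> \<rho> h)"

definition G_stable :: "('g, 'm) monoid_scheme \<Rightarrow> ('g \<Rightarrow> ('n \<Rightarrow> 'k) \<Rightarrow> ('n \<Rightarrow> 'k)) \<Rightarrow> ('n \<Rightarrow> 'k) set \<Rightarrow> bool" where
  "G_stable G \<rho> W \<longleftrightarrow> (\<forall>g\<in>carrier G. \<rho> g ` W \<subseteq> W)"

definition subrep :: "('g, 'm) monoid_scheme \<Rightarrow> ('g \<Rightarrow> ('n \<Rightarrow> 'k::comm_semiring_1) \<Rightarrow> ('n \<Rightarrow> 'k)) \<Rightarrow> ('n \<Rightarrow> 'k) set \<Rightarrow> bool" where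
  "subrep G \<rho> W \<longleftrightarrow> submodule W \<and> G_stable G \<rho> W"

definition direct_sum2 :: "('n \<Rightarrow> 'k::comm_semiring_1) set \<Rightarrow> ('n \<Rightarrow> 'k) set \<Rightarrow> ('n \<Rightarrow> 'k) set \<Rightarrow> bool" where
  "direct_sum2 W W1 W2 \<longleftrightarrow> W1 \<subseteq> W \<and> W2 \<subseteq> W \<and>
     (\<forall>w\<in>W. \<exists>!p. fst p \<in> W1 \<and> snd p \<in> W2 \<and> w = fst p + snd p)"

definition direct_sum :: "('n \<Rightarrow> 'k::comm_semiring_1) set \<Rightarrow> ('n \<Rightarrow> 'k) set set \<Rightarrow> bool" where
  "direct_sum W D \<longleftrightarrow> finite D \<and> (\<forall>U\<in>D. U \<subseteq> W) \<and>
     (\<forall>w\<in>W. \<exists>!f. (\<forall>U\<in>D. f U \<in> U) \<and> (\<forall>U. U \<notin> D \<longrightarrow> f U = 0) \<and> w = (\<Sum>U\<in>D. f U))"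

definition indecomposable :: "('g, 'm) monoid_scheme \<Rightarrow> ('g \<Rightarrow> ('n \<Rightarrow> 'k::comm_semiring_1) \<Rightarrow> ('n \<Rightarrow> 'k)) \<Rightarrow> ('n \<Rightarrow> 'k) set \<Rightarrow> bool" where
  "indecomposable G \<rho> W \<longleftrightarrow> W \<noteq> {0} \<and>
     \<not> (\<exists>W1 W2. subrep G \<rho> W1 \<and> subrep G \<rho> W2 \<and> W1 \<noteq> {0} \<and> W2 \<noteq> {0} \<and> direct_sum2 W W1 W2)"

definition transitive_on_basis_lines :: "('g, 'm) monoid_scheme \<Rightarrow> ('g \<Rightarrow> ('n \<Rightarrow> 'k::comm_semiring_1) \<Rightarrow> ('n \<Rightarrow> 'k)) \<Rightarrow> bool" where
  "transitive_on_basis_lines G \<rho> \<longleftrightarrow>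
     (\<forall>L1\<in>basis_lines. \<forall>L2\<in>basis_lines. \<exists>g\<in>carrier G. \<rho> g ` L1 = (L2 :: ('n \<Rightarrow> 'k) set))"

end

theory Submission
  imports Defs
begin

text \<open>Over a zero-sum-free semifield no nontrivial finite sum vanishes, so a coordinate subspace
  contains every summand of each of its elements. Expanding e_j = h (f e_j), where e_j = unit_vec j,
  for mutually inverse linear maps f and h therefore forces f e_j to be a nonzero multiple of a single
  unit vector: invertible linear maps are monomial, and likewise every basis consists of multiples of
  unit vectors. Hence the basis lines are the coordinate lines, and G acts on them through an action
  on the index set. The same principle puts each unit vector into exactly one summand of any direct
  sum decomposition, so every summand is the coordinate subspace of the unit vectors it contains;
  for a subrepresentation this index set is a union of orbits, and indecomposability makes it a
  single orbit. So the decomposition into the coordinate subspaces of the orbits exists, is the only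
  one, and is trivial exactly when the action on basis lines is transitive.\<close>

section \<open>Coordinate subspaces and linear maps\<close>

lemma sum_fun_apply: "(\<Sum>x\<in>A. f x) i = (\<Sum>x\<in>A. f x i)"
  by (induction A rule: infinite_finite_induct) auto

lemma smult_vec_apply [simp]: "smult_vec c v i = c * v i"
  by (simp add: smult_vec_def)

lemma smult_vec_smult_vec [simp]: "smult_vec a (smult_vec b v) = smult_vec (a * b) v"
  by (simp add: smult_vec_def mult.assoc)

lemma smult_vec_one [simp]: "smult_vec 1 v = v"
  by (simp add: smult_vec_def)

lemma smult_vec_zero_left [simp]: "smult_vec 0 v = 0"
  by (simp add: smult_vec_def fun_eq_iff)

definition unit_vec :: "'n \<Rightarrow> 'n \<Rightarrow> 'k::zero_neq_one" where
  "unit_vec i = (\<lambda>j. if j = i then 1 else 0)"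

definition coord_subspace :: "'n set \<Rightarrow> ('n \<Rightarrow> 'k::zero) set" where
  "coord_subspace S = {v. \<forall>j. j \<notin> S \<longrightarrow> v j = 0}"

definition coord_proj :: "'n set \<Rightarrow> ('n \<Rightarrow> 'k::zero) \<Rightarrow> 'n \<Rightarrow> 'k" where
  "coord_proj S v = (\<lambda>j. if j \<in> S then v j else 0)"

definition unit_support :: "('n \<Rightarrow> 'k::zero_neq_one) set \<Rightarrow> 'n set" where
  "unit_support U = {j. unit_vec j \<in> U}"

lemma unit_vec_apply: "unit_vec i j = (if j = i then 1 else 0)"
  by (simp add: unit_vec_def)

lemma unit_vec_neq_zero: "unit_vec i \<noteq> 0"
  by (metis unit_vec_apply zero_fun_apply zero_neq_one)

lemma inj_unit_vec: "inj unit_vec"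
  by (rule injI) (metis unit_vec_apply zero_neq_one)

lemma unit_vec_in_coord_subspace_iff [simp]: "unit_vec i \<in> coord_subspace S \<longleftrightarrow> i \<in> S"
  by (auto simp: coord_subspace_def unit_vec_apply)

lemma unit_support_coord_subspace [simp]: "unit_support (coord_subspace S) = S"
  by (simp add: unit_support_def)

lemma coord_subspace_UNIV [simp]: "coord_subspace UNIV = UNIV"
  by (simp add: coord_subspace_def)

lemma coord_subspace_empty: "coord_subspace {} = {0}"
  by (auto simp: coord_subspace_def fun_eq_iff)

lemma coord_proj_in_coord_subspace: "coord_proj S v \<in> coord_subspace S"
  by (simp add: coord_subspace_def coord_proj_def)

lemma coord_proj_eq_self: "v \<in> coord_subspace S \<Longrightarrow> coord_proj S v = v"
  by (auto simp: coord_subspace_def coord_proj_def)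

lemma coord_subspace_singleton:
  "v \<in> coord_subspace {i} \<longleftrightarrow> v = smult_vec (v i) (unit_vec i)"
  by (auto simp: coord_subspace_def unit_vec_apply fun_eq_iff)

lemma sum_smult_unit_vec:
  fixes a :: "'n::finite \<Rightarrow> 'k::comm_semiring_1"
  shows "(\<Sum>j\<in>S. smult_vec (a j) (unit_vec j)) = coord_proj S a"
proof
  fix i
  have "(\<Sum>j\<in>S. smult_vec (a j) (unit_vec j)) i = (\<Sum>j\<in>S. if j = i then a i else 0)"
    unfolding sum_fun_apply by (rule sum.cong) (auto simp: unit_vec_apply)
  then show "(\<Sum>j\<in>S. smult_vec (a j) (unit_vec j)) i = coord_proj S a i"
    by (simp add: coord_proj_def)
qed

lemma coord_subspace_expansion:
  fixes v :: "'n::finite \<Rightarrow> 'k::comm_semiring_1"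
  assumes "v \<in> coord_subspace S"
  shows "v = (\<Sum>j\<in>S. smult_vec (v j) (unit_vec j))"
  by (simp add: sum_smult_unit_vec coord_proj_eq_self[OF assms])

lemma sum_coord_proj_partition:
  assumes "finite A" and "\<And>j. \<exists>!a. a \<in> A \<and> j \<in> S a"
  shows "(\<Sum>a\<in>A. coord_proj (S a) w) = w"
proof
  fix j
  obtain a where a: "a \<in> A" "j \<in> S a" and unique: "\<And>b. b \<in> A \<Longrightarrow> j \<in> S b \<Longrightarrow> b = a"
    using assms(2)[of j] by blast
  have "(\<Sum>b\<in>A. coord_proj (S b) w) j = (\<Sum>b\<in>A. if b = a then w j else 0)"
    unfolding sum_fun_apply coord_proj_def
    by (rule sum.cong) (use a in \<open>auto dest: unique\<close>)
  also have "\<dots> = w j"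
    using a assms(1) by simp
  finally show "(\<Sum>b\<in>A. coord_proj (S b) w) j = w j" .
qed

lemma submodule_zero: "submodule W \<Longrightarrow> 0 \<in> W"
  by (simp add: submodule_def)

lemma submodule_smult: "submodule W \<Longrightarrow> v \<in> W \<Longrightarrow> smult_vec c v \<in> W"
  by (simp add: submodule_def)

lemma submodule_sum:
  assumes "submodule W" and "\<And>x. x \<in> A \<Longrightarrow> g x \<in> W"
  shows "sum g A \<in> W"
  using assms(2)
proof (induction A rule: infinite_finite_induct)
  case (insert x F)
  then have "g x \<in> W" "sum g F \<in> W" by simp_all
  then show ?case
    using assms(1) insert(1,2) unfolding submodule_def by (simp only: sum.insert[OF insert(1,2)])
qed (use assms(1) in \<open>simp_all add: submodule_zero\<close>)

lemma submodule_coord_subspace: "submodule (coord_subspace S)"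
  by (auto simp: submodule_def coord_subspace_def)

lemma lin_map_zero: "lin_map f \<Longrightarrow> f 0 = 0"
  unfolding lin_map_def by (metis smult_vec_zero_left)

lemma lin_map_smult: "lin_map f \<Longrightarrow> f (smult_vec c v) = smult_vec c (f v)"
  by (simp add: lin_map_def)

lemma lin_map_sum: "lin_map f \<Longrightarrow> f (sum g A) = (\<Sum>x\<in>A. f (g x))"
  by (induction A rule: infinite_finite_induct) (auto simp: lin_map_zero lin_map_def)

lemma lin_map_id: "lin_map id"
  by (simp add: lin_map_def)

lemma lin_map_expansion:
  fixes v :: "'n::finite \<Rightarrow> 'k::comm_semiring_1"
  assumes "lin_map f" and "v \<in> coord_subspace S"
  shows "f v = (\<Sum>j\<in>S. smult_vec (v j) (f (unit_vec j)))"
  by (subst coord_subspace_expansion[OF assms(2)]) (simp add: lin_map_sum[OF assms(1)] lin_map_smult[OF assms(1)])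

lemma lin_map_image_coord_subspace:
  fixes f :: "('n::finite \<Rightarrow> 'k::comm_semiring_1) \<Rightarrow> 'n \<Rightarrow> 'k"
  assumes "lin_map f" and "submodule W" and "\<And>j. j \<in> S \<Longrightarrow> f (unit_vec j) \<in> W"
  shows "f ` coord_subspace S \<subseteq> W"
proof
  fix w assume "w \<in> f ` coord_subspace S"
  then obtain v where v: "v \<in> coord_subspace S" and w: "w = f v" by blast
  show "w \<in> W"
    unfolding w lin_map_expansion[OF assms(1) v] using assms(2,3) by (intro submodule_sum submodule_smult)
qed

lemma coord_subspace_subset_submodule:
  fixes W :: "('n::finite \<Rightarrow> 'k::comm_semiring_1) set"
  assumes "submodule W" and "\<And>j. j \<in> S \<Longrightarrow> unit_vec j \<in> W"
  shows "coord_subspace S \<subseteq> W"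
  using lin_map_image_coord_subspace[of id W S] lin_map_id assms by simp

lemma line_image:
  assumes "lin_map f"
  shows "f ` line v = line (f v)"
proof -
  have "(\<lambda>c. f (smult_vec c v)) = (\<lambda>c. smult_vec c (f v))"
    using lin_map_smult[OF assms] by (rule ext)
  then show ?thesis
    by (metis (no_types) full_SetCompr_eq image_image line_def)
qed

lemma in_line_self: "v \<in> line v"
  unfolding line_def by (metis (mono_tags) mem_Collect_eq smult_vec_one)

section \<open>Zero-sum-free semifields and monomial maps\<close>

lemma semifield_inverse:
  "semifield TYPE('k::comm_semiring_1) \<Longrightarrow> (a::'k) \<noteq> 0 \<Longrightarrow> \<exists>b. b * a = 1"
  unfolding semifield_def by (metis mult.commute)

lemma semifield_mult_neq_zero:
  assumes "semifield TYPE('k::comm_semiring_1)" and "(a::'k) \<noteq> 0" and "b \<noteq> 0"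
  shows "a * b \<noteq> 0"
  by (metis assms semifield_inverse mult.assoc mult_1 mult_zero_right)

lemma submodule_smult_cancel:
  assumes "semifield TYPE('k::comm_semiring_1)" and "submodule W" and "(a::'k) \<noteq> 0"
    and "smult_vec a v \<in> W"
  shows "v \<in> W"
proof -
  obtain b where "b * a = 1"
    using semifield_inverse[OF assms(1,3)] by blast
  then have "v = smult_vec b (smult_vec a v)" by simp
  then show ?thesis
    using assms(2,4) submodule_smult by metis
qed

lemma line_smult:
  assumes "semifield TYPE('k::comm_semiring_1)" and "(c::'k) \<noteq> 0"
  shows "line (smult_vec c v) = line v"
proof -
  obtain b where b: "b * c = 1"
    using semifield_inverse[OF assms] by blast
  have "smult_vec d v = smult_vec (d * b) (smult_vec c v)" for d
    by (simp add: mult.assoc b)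
  then show ?thesis
    unfolding line_def by (metis (lifting) smult_vec_smult_vec)
qed

lemma zero_sum_free_sum_eq_zero:
  assumes "zero_sum_free TYPE('k::comm_semiring_1)" and "finite A" and "sum (g :: _ \<Rightarrow> 'k) A = 0"
    and "a \<in> A"
  shows "g a = 0"
  using assms(2-)
proof (induction A rule: finite_induct)
  case (insert x F)
  then show ?case
    using assms(1) unfolding zero_sum_free_def by (metis insert_iff sum.insert)
qed simp

lemma zero_sum_free_sum_in_coord_subspace:
  assumes "zero_sum_free TYPE('k::comm_semiring_1)" and "finite A"
    and "(\<Sum>a\<in>A. x a) \<in> (coord_subspace S :: ('n \<Rightarrow> 'k) set)" and "a \<in> A"
  shows "x a \<in> coord_subspace S"
  unfolding coord_subspace_def
proof (intro CollectI allI impI)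
  fix j assume "j \<notin> S"
  then have "(\<Sum>b\<in>A. x b j) = 0"
    using assms(3) by (simp add: coord_subspace_def sum_fun_apply[symmetric])
  then show "x a j = 0"
    by (rule zero_sum_free_sum_eq_zero[OF assms(1,2) _ assms(4)])
qed

lemma unit_vec_in_some_summand:
  fixes x :: "'a \<Rightarrow> 'n \<Rightarrow> 'k::comm_semiring_1"
  assumes sf: "semifield TYPE('k)" and zsf: "zero_sum_free TYPE('k)" and "finite A"
    and "\<And>a. a \<in> A \<Longrightarrow> submodule (W a)" and "\<And>a. a \<in> A \<Longrightarrow> x a \<in> W a"
    and sum: "(\<Sum>a\<in>A. x a) = unit_vec i"
  shows "\<exists>a\<in>A. unit_vec i \<in> W a"
proof -
  have "(\<Sum>a\<in>A. x a i) \<noteq> 0"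
    using sum by (simp add: sum_fun_apply[symmetric] unit_vec_apply)
  then obtain a where a: "a \<in> A" and nz: "x a i \<noteq> 0"
    using sum.neutral[of A "\<lambda>a. x a i"] by blast
  have "x a \<in> coord_subspace {i}"
    using zero_sum_free_sum_in_coord_subspace[OF zsf \<open>finite A\<close>, of x "{i}" a] sum a by simp
  then have "smult_vec (x a i) (unit_vec i) \<in> W a"
    using assms(5)[OF a] coord_subspace_singleton by metis
  then show ?thesis
    using submodule_smult_cancel[OF sf assms(4)[OF a] nz] a by blast
qed

lemma inverse_lin_map_unit_vec_support:
  fixes f h :: "('n::finite \<Rightarrow> 'k::comm_semiring_1) \<Rightarrow> 'n \<Rightarrow> 'k"
  assumes sf: "semifield TYPE('k)" and zsf: "zero_sum_free TYPE('k)"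
    and "lin_map h" and "\<And>v. h (f v) = v" and "f (unit_vec j) l \<noteq> 0"
  shows "h (unit_vec l) \<in> coord_subspace {j}"
proof -
  have "(\<Sum>m\<in>UNIV. smult_vec (f (unit_vec j) m) (h (unit_vec m))) \<in> coord_subspace {j}"
    using lin_map_expansion[OF assms(3), of "f (unit_vec j)" UNIV] assms(4) by simp
  then have "smult_vec (f (unit_vec j) l) (h (unit_vec l)) \<in> coord_subspace {j}"
    by (rule zero_sum_free_sum_in_coord_subspace[OF zsf finite_UNIV _ UNIV_I])
  then show ?thesis
    by (rule submodule_smult_cancel[OF sf submodule_coord_subspace assms(5)])
qed

text \<open>The support argument applied to f and to h in turn: if e_l occurs in f e_j, then h e_l is a
  multiple of e_j, so e_j occurs in h e_l, and then f e_j is a multiple of e_l.\<close>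

lemma invertible_lin_map_monomial:
  fixes f h :: "('n::finite \<Rightarrow> 'k::comm_semiring_1) \<Rightarrow> 'n \<Rightarrow> 'k"
  assumes sf: "semifield TYPE('k)" and zsf: "zero_sum_free TYPE('k)"
    and "lin_map f" and "lin_map h" and hf: "\<And>v. h (f v) = v" and fh: "\<And>v. f (h v) = v"
  shows "\<exists>l c. c \<noteq> 0 \<and> f (unit_vec j) = smult_vec c (unit_vec l)"
proof -
  have "f (unit_vec j) \<noteq> 0"
    using hf[of "unit_vec j"] lin_map_zero[OF assms(4)] unit_vec_neq_zero by metis
  then obtain l where l: "f (unit_vec j) l \<noteq> 0"
    by (auto simp: fun_eq_iff)
  have hl: "h (unit_vec l) \<in> coord_subspace {j}"
    by (rule inverse_lin_map_unit_vec_support[OF sf zsf assms(4) hf l])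
  have "h (unit_vec l) \<noteq> 0"
    using fh[of "unit_vec l"] lin_map_zero[OF assms(3)] unit_vec_neq_zero by metis
  then have "h (unit_vec l) j \<noteq> 0"
    using hl coord_subspace_singleton by (metis smult_vec_zero_left)
  then have "f (unit_vec j) \<in> coord_subspace {l}"
    by (rule inverse_lin_map_unit_vec_support[OF sf zsf assms(3) fh])
  then have "f (unit_vec j) = smult_vec (f (unit_vec j) l) (unit_vec l)"
    by (simp only: coord_subspace_singleton)
  then show ?thesis
    using l by blast
qed

section \<open>Bases and basis lines\<close>

lemma is_basis_coord_subspace:
  "is_basis (coord_subspace S :: ('n::finite \<Rightarrow> 'k::comm_semiring_1) set) (unit_vec ` S)"
  unfolding is_basis_def
proof (intro conjI ballI)
  show "finite (unit_vec ` S)" "unit_vec ` S \<subseteq> coord_subspace S"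
    by auto
next
  fix w :: "'n \<Rightarrow> 'k" assume w: "w \<in> coord_subspace S"
  have combination: "(\<Sum>b\<in>unit_vec ` S. smult_vec (c b) b) = coord_proj S (\<lambda>j. c (unit_vec j))"
    for c :: "('n \<Rightarrow> 'k) \<Rightarrow> 'k"
    by (simp add: sum.reindex[OF inj_on_subset[OF inj_unit_vec subset_UNIV]] sum_smult_unit_vec)
  have represents: "w = coord_proj S (\<lambda>j. c (unit_vec j)) \<longleftrightarrow> (\<forall>j\<in>S. c (unit_vec j) = w j)"
    for c :: "('n \<Rightarrow> 'k) \<Rightarrow> 'k"
    using w by (auto simp: coord_proj_def coord_subspace_def fun_eq_iff)
  let ?c = "\<lambda>b. if b \<in> unit_vec ` S then w (the_inv unit_vec b) else 0"
  show "\<exists>!c. (\<forall>b. b \<notin> unit_vec ` S \<longrightarrow> c b = 0) \<and> w = (\<Sum>b\<in>unit_vec ` S. smult_vec (c b) b)"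
    unfolding combination represents
  proof (rule ex1I[of _ ?c])
    show "(\<forall>b. b \<notin> unit_vec ` S \<longrightarrow> ?c b = 0) \<and> (\<forall>j\<in>S. ?c (unit_vec j) = w j)"
      by (simp add: the_inv_f_f[OF inj_unit_vec])
  next
    fix c assume c: "(\<forall>b. b \<notin> unit_vec ` S \<longrightarrow> c b = 0) \<and> (\<forall>j\<in>S. c (unit_vec j) = w j)"
    show "c = ?c"
      using c by (auto simp: fun_eq_iff the_inv_f_f[OF inj_unit_vec])
  qed
qed

lemma free_submodule_coord_subspace:
  "free_submodule (coord_subspace S :: ('n::finite \<Rightarrow> 'k::comm_semiring_1) set)"
  using submodule_coord_subspace is_basis_coord_subspace unfolding free_submodule_def by blast

lemma is_basis_coeff_of_basis_vector:
  assumes B: "is_basis W B" and "b \<in> B"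
    and "\<forall>b'. b' \<notin> B \<longrightarrow> c b' = 0" and "b = (\<Sum>b'\<in>B. smult_vec (c b') b')"
  shows "c = (\<lambda>b'. if b' = b then 1 else 0)"
proof -
  let ?represents = "\<lambda>c. (\<forall>b'. b' \<notin> B \<longrightarrow> c b' = 0) \<and> b = (\<Sum>b'\<in>B. smult_vec (c b') b')"
  have "finite B" and unique: "\<exists>!c. ?represents c"
    using B \<open>b \<in> B\<close> unfolding is_basis_def by blast+
  have "(THE c. ?represents c) = c"
    by (rule the1_equality[OF unique]) (use assms(3,4) in blast)
  moreover have "(THE c. ?represents c) = (\<lambda>b'. if b' = b then 1 else 0)"
    by (rule the1_equality[OF unique])
      (use \<open>b \<in> B\<close> \<open>finite B\<close> in \<open>simp add: if_distrib[of "\<lambda>c. smult_vec c _"] cong: if_cong\<close>)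
  ultimately show ?thesis
    by simp
qed

text \<open>Substituting the expansions e_j = (\<Sum>b'\<in>B. C j b' \<cdot> b') into b = (\<Sum>j. b j \<cdot> e_j) and
  comparing coefficients at b gives (\<Sum>j. b j * C j b) = 1, so some b j * C j b is nonzero;
  zero-sum-freeness applied to the expansion of that e_j then puts b on the line of e_j.\<close>

lemma basis_vector_monomial:
  fixes B :: "('n::finite \<Rightarrow> 'k::comm_semiring_1) set"
  assumes sf: "semifield TYPE('k)" and zsf: "zero_sum_free TYPE('k)"
    and B: "is_basis UNIV B" and b: "b \<in> B"
  shows "\<exists>i c. c \<noteq> 0 \<and> b = smult_vec c (unit_vec i)"
proof -
  have fin: "finite B"
    using B by (simp add: is_basis_def)
  have "\<forall>j. \<exists>c. (\<forall>b'. b' \<notin> B \<longrightarrow> c b' = 0) \<and> unit_vec j = (\<Sum>b'\<in>B. smult_vec (c b') b')"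
    using B unfolding is_basis_def by blast
  then obtain C where C_supp: "\<And>j b'. b' \<notin> B \<Longrightarrow> C j b' = 0"
    and C: "\<And>j. unit_vec j = (\<Sum>b'\<in>B. smult_vec (C j b') b')"
    by metis
  define d where "d b' = (\<Sum>j\<in>UNIV. b j * C j b')" for b'
  have "b = (\<Sum>j\<in>UNIV. smult_vec (b j) (unit_vec j))"
    by (rule coord_subspace_expansion) simp
  also have "\<dots> = (\<Sum>j\<in>UNIV. \<Sum>b'\<in>B. smult_vec (b j * C j b') b')"
    by (simp add: C fun_eq_iff sum_fun_apply sum_distrib_left mult.assoc)
  also have "\<dots> = (\<Sum>b'\<in>B. smult_vec (d b') b')"
    by (subst sum.swap) (simp add: d_def fun_eq_iff sum_fun_apply sum_distrib_right)
  finally have "b = (\<Sum>b'\<in>B. smult_vec (d b') b')" .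
  then have "d = (\<lambda>b'. if b' = b then 1 else 0)"
    by (rule is_basis_coeff_of_basis_vector[OF B b, rotated]) (simp add: d_def C_supp)
  then have "(\<Sum>j\<in>UNIV. b j * C j b) \<noteq> 0"
    by (simp add: d_def fun_eq_iff)
  then obtain j where "b j * C j b \<noteq> 0"
    using sum.neutral[of UNIV "\<lambda>j. b j * C j b"] by blast
  then have bj: "b j \<noteq> 0" and Cj: "C j b \<noteq> 0"
    by auto
  have "(\<Sum>b'\<in>B. smult_vec (C j b') b') \<in> coord_subspace {j}"
    unfolding C[symmetric] by simp
  then have "smult_vec (C j b) b \<in> coord_subspace {j}"
    by (rule zero_sum_free_sum_in_coord_subspace[OF zsf fin _ b])
  then have "b \<in> coord_subspace {j}"
    by (rule submodule_smult_cancel[OF sf submodule_coord_subspace Cj])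
  then have "b = smult_vec (b j) (unit_vec j)"
    by (simp only: coord_subspace_singleton)
  then show ?thesis
    using bj by blast
qed

lemma basis_lines_unit_vec:
  assumes sf: "semifield TYPE('k::comm_semiring_1)" and zsf: "zero_sum_free TYPE('k)"
  shows "(basis_lines :: ('n::finite \<Rightarrow> 'k) set set) = range (\<lambda>i. line (unit_vec i))"
proof
  show "basis_lines \<subseteq> range (\<lambda>i. line (unit_vec i) :: ('n \<Rightarrow> 'k) set)"
  proof
    fix L :: "('n \<Rightarrow> 'k) set" assume "L \<in> basis_lines"
    then obtain b B where L: "L = line b" and "is_basis UNIV B" "b \<in> B"
      unfolding basis_lines_def by blast
    then obtain i c where "c \<noteq> 0" "b = smult_vec c (unit_vec i)"
      using basis_vector_monomial[OF sf zsf] by blast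
    then have "L = line (unit_vec i)"
      using L line_smult[OF sf] by simp
    then show "L \<in> range (\<lambda>i. line (unit_vec i))"
      by simp
  qed
next
  show "range (\<lambda>i. line (unit_vec i)) \<subseteq> (basis_lines :: ('n \<Rightarrow> 'k) set set)"
    using is_basis_coord_subspace[of UNIV] unfolding basis_lines_def by auto
qed

section \<open>Direct sums\<close>

lemma direct_sum2_inter:
  assumes "direct_sum2 W W1 W2" and "submodule W1" "submodule W2" and "x \<in> W1" "x \<in> W2"
  shows "x = 0"
proof -
  have "x \<in> W" and "\<exists>!p. fst p \<in> W1 \<and> snd p \<in> W2 \<and> x = fst p + snd p"
    using assms(1,4) unfolding direct_sum2_def by blast+
  moreover have "fst (x, 0) \<in> W1 \<and> snd (x, 0) \<in> W2 \<and> x = fst (x, 0) + snd (x, 0)"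
    and "fst (0, x) \<in> W1 \<and> snd (0, x) \<in> W2 \<and> x = fst (0, x) + snd (0, x)"
    using assms(2-) by (simp_all add: submodule_zero)
  ultimately have "(x, 0) = (0, x)"
    by (metis (no_types, lifting) ex1E)
  then show ?thesis
    by simp
qed

lemma direct_sum2_unit_vec:
  fixes W W1 W2 :: "('n::finite \<Rightarrow> 'k::comm_semiring_1) set"
  assumes sf: "semifield TYPE('k)" and zsf: "zero_sum_free TYPE('k)"
    and ds: "direct_sum2 W W1 W2" and "submodule W1" "submodule W2" and "unit_vec i \<in> W"
  shows "unit_vec i \<in> W1 \<or> unit_vec i \<in> W2"
proof -
  obtain p where p: "fst p \<in> W1" "snd p \<in> W2" "unit_vec i = fst p + snd p"
    using ds \<open>unit_vec i \<in> W\<close> unfolding direct_sum2_def by blast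
  have "\<exists>b\<in>UNIV. unit_vec i \<in> (if b then W1 else W2)"
    by (rule unit_vec_in_some_summand[OF sf zsf, where x = "\<lambda>b. if b then fst p else snd p"])
      (use assms(4,5) p in \<open>auto simp: UNIV_bool add.commute\<close>)
  then show ?thesis
    by (metis (full_types))
qed

lemma direct_sum2_coord_subspace:
  assumes "A \<inter> B = {}"
  shows "direct_sum2 (coord_subspace (A \<union> B) :: ('n \<Rightarrow> 'k::comm_semiring_1) set)
    (coord_subspace A) (coord_subspace B)"
  unfolding direct_sum2_def
proof (intro conjI ballI)
  show "coord_subspace A \<subseteq> coord_subspace (A \<union> B)" "coord_subspace B \<subseteq> coord_subspace (A \<union> B)"
    by (auto simp: coord_subspace_def)
next
  fix w :: "'n \<Rightarrow> 'k" assume w: "w \<in> coord_subspace (A \<union> B)"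
  show "\<exists>!p. fst p \<in> coord_subspace A \<and> snd p \<in> coord_subspace B \<and> w = fst p + snd p"
  proof (rule ex1I[of _ "(coord_proj A w, coord_proj B w)"])
    show "fst (coord_proj A w, coord_proj B w) \<in> coord_subspace A \<and>
        snd (coord_proj A w, coord_proj B w) \<in> coord_subspace B \<and>
        w = fst (coord_proj A w, coord_proj B w) + snd (coord_proj A w, coord_proj B w)"
      using w assms by (auto simp: coord_proj_in_coord_subspace coord_proj_def coord_subspace_def fun_eq_iff)
  next
    fix p assume p: "fst p \<in> coord_subspace A \<and> snd p \<in> coord_subspace B \<and> w = fst p + snd p"
    then have "fst p = coord_proj A w" "snd p = coord_proj B w"
      using assms by (auto simp: coord_proj_def coord_subspace_def fun_eq_iff)
    then show "p = (coord_proj A w, coord_proj B w)"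
      by (simp add: prod_eq_iff)
  qed
qed

definition is_decomposition ::
  "('n \<Rightarrow> 'k::comm_semiring_1) set set \<Rightarrow> ('n \<Rightarrow> 'k) \<Rightarrow> (('n \<Rightarrow> 'k) set \<Rightarrow> 'n \<Rightarrow> 'k) \<Rightarrow> bool" where
  "is_decomposition D w f \<longleftrightarrow> (\<forall>U\<in>D. f U \<in> U) \<and> (\<forall>U. U \<notin> D \<longrightarrow> f U = 0) \<and> w = (\<Sum>U\<in>D. f U)"

lemma direct_sum_iff_unique_decomposition:
  "direct_sum W D \<longleftrightarrow> finite D \<and> (\<forall>U\<in>D. U \<subseteq> W) \<and> (\<forall>w\<in>W. \<exists>!f. is_decomposition D w f)"
  by (simp add: direct_sum_def is_decomposition_def)

lemma is_decomposition_single: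
  assumes "finite D" and "\<forall>V\<in>D. submodule V" and "U \<in> D" and "x \<in> U"
  shows "is_decomposition D x (\<lambda>V. if V = U then x else 0)"
  using assms by (auto simp: is_decomposition_def submodule_zero)

lemma direct_sum_decomposition_of_summand_elem:
  assumes ds: "direct_sum W D" and sub: "\<forall>V\<in>D. submodule V" and "U \<in> D" and "x \<in> U"
    and f: "is_decomposition D x f"
  shows "f = (\<lambda>V. if V = U then x else 0)"
proof -
  have "finite D" and "x \<in> W"
    using ds \<open>U \<in> D\<close> \<open>x \<in> U\<close> by (auto simp: direct_sum_def)
  then have "\<exists>!f. is_decomposition D x f"
    using ds by (simp add: direct_sum_iff_unique_decomposition)
  then show ?thesis
    using f is_decomposition_single[OF \<open>finite D\<close> sub \<open>U \<in> D\<close> \<open>x \<in> U\<close>] by (metis ex1E)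
qed

lemma direct_sum_summands_inter:
  assumes ds: "direct_sum W D" and sub: "\<forall>V\<in>D. submodule V"
    and "U \<in> D" "U' \<in> D" "U \<noteq> U'" and "x \<in> U" "x \<in> U'"
  shows "x = 0"
proof -
  have "finite D"
    using ds by (simp add: direct_sum_def)
  have "(\<lambda>V. if V = U' then x else 0) = (\<lambda>V. if V = U then x else 0)"
    by (rule direct_sum_decomposition_of_summand_elem[OF ds sub \<open>U \<in> D\<close> \<open>x \<in> U\<close>])
      (rule is_decomposition_single[OF \<open>finite D\<close> sub \<open>U' \<in> D\<close> \<open>x \<in> U'\<close>])
  then show ?thesis
    using \<open>U \<noteq> U'\<close> by (metis (full_types))
qed

lemma direct_sum_UNIV_unit_vec_unique:
  fixes D :: "('n::finite \<Rightarrow> 'k::comm_semiring_1) set set"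
  assumes sf: "semifield TYPE('k)" and zsf: "zero_sum_free TYPE('k)"
    and ds: "direct_sum UNIV D" and sub: "\<forall>U\<in>D. submodule U"
  shows "\<exists>!U. U \<in> D \<and> unit_vec j \<in> U"
proof -
  have "finite D" and "\<exists>!f. is_decomposition D (unit_vec j) f"
    using ds by (simp_all add: direct_sum_iff_unique_decomposition)
  then obtain f where f: "is_decomposition D (unit_vec j) f"
    by (elim ex1E) blast
  have "\<exists>U\<in>D. unit_vec j \<in> U"
    by (rule unit_vec_in_some_summand[OF sf zsf \<open>finite D\<close>, where W = "\<lambda>U. U" and x = f])
      (use sub f in \<open>auto simp: is_decomposition_def\<close>)
  then obtain U where U: "U \<in> D" "unit_vec j \<in> U" ..
  have "U' = U" if "U' \<in> D" "unit_vec j \<in> U'" for U'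
  proof (rule ccontr)
    assume "U' \<noteq> U"
    then have "unit_vec j = (0 :: 'n \<Rightarrow> 'k)"
      using direct_sum_summands_inter[OF ds sub that(1) U(1)] that(2) U(2) by blast
    then show False
      by (simp add: unit_vec_neq_zero)
  qed
  then show ?thesis
    using U by blast
qed

lemma is_decomposition_coord_proj:
  assumes "finite D" and unique: "\<And>j. \<exists>!U. U \<in> D \<and> unit_vec j \<in> U"
    and "\<And>U. U \<in> D \<Longrightarrow> coord_subspace (unit_support U) \<subseteq> U"
  shows "is_decomposition D w (\<lambda>U. if U \<in> D then coord_proj (unit_support U) w else 0)"
  unfolding is_decomposition_def
proof (intro conjI ballI allI impI)
  fix U assume "U \<in> D"
  then show "(if U \<in> D then coord_proj (unit_support U) w else 0) \<in> U"
    using assms(3) coord_proj_in_coord_subspace by auto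
next
  have "(\<Sum>U\<in>D. coord_proj (unit_support U) w) = w"
    by (rule sum_coord_proj_partition[OF assms(1)]) (simp add: unit_support_def unique)
  then show "w = (\<Sum>U\<in>D. if U \<in> D then coord_proj (unit_support U) w else 0)"
    by simp
qed simp

lemma direct_sum_UNIV_summand_eq_coord_subspace:
  fixes D :: "('n::finite \<Rightarrow> 'k::comm_semiring_1) set set"
  assumes sf: "semifield TYPE('k)" and zsf: "zero_sum_free TYPE('k)"
    and ds: "direct_sum UNIV D" and sub: "\<forall>U\<in>D. submodule U" and "U \<in> D"
  shows "U = coord_subspace (unit_support U)"
proof
  have spanned: "coord_subspace (unit_support V) \<subseteq> V" if "V \<in> D" for V
    using coord_subspace_subset_submodule[of V "unit_support V"] sub that by (simp add: unit_support_def)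
  then show "coord_subspace (unit_support U) \<subseteq> U"
    using \<open>U \<in> D\<close> .
  show "U \<subseteq> coord_subspace (unit_support U)"
  proof
    fix u assume "u \<in> U"
    have unique: "\<exists>!V. V \<in> D \<and> unit_vec j \<in> V" for j
      by (rule direct_sum_UNIV_unit_vec_unique[OF sf zsf ds sub])
    have "finite D"
      using ds by (simp add: direct_sum_def)
    have components: "(\<lambda>V. if V \<in> D then coord_proj (unit_support V) u else 0) = (\<lambda>V. if V = U then u else 0)"
      by (rule direct_sum_decomposition_of_summand_elem[OF ds sub \<open>U \<in> D\<close> \<open>u \<in> U\<close>
            is_decomposition_coord_proj[OF \<open>finite D\<close> unique spanned]])
    show "u \<in> coord_subspace (unit_support U)"
      unfolding coord_subspace_def
    proof (intro CollectI allI impI)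
      fix k assume "k \<notin> unit_support U"
      obtain V where "V \<in> D" "unit_vec k \<in> V"
        using unique[of k] by blast
      then have "V \<noteq> U" "k \<in> unit_support V"
        using \<open>k \<notin> unit_support U\<close> by (auto simp: unit_support_def)
      then show "u k = 0"
        using fun_cong[OF fun_cong[OF components, of V], of k] \<open>V \<in> D\<close> by (simp add: coord_proj_def)
    qed
  qed
qed

lemma is_decomposition_coord_subspaces_unique:
  fixes D :: "('n::finite \<Rightarrow> 'k::comm_semiring_1) set set"
  assumes "finite D" and unique: "\<And>j. \<exists>!U. U \<in> D \<and> unit_vec j \<in> U"
    and coord: "\<And>U. U \<in> D \<Longrightarrow> U = coord_subspace (unit_support U)"
    and f: "is_decomposition D w f"
  shows "f = (\<lambda>U. if U \<in> D then coord_proj (unit_support U) w else 0)"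
proof (intro ext)
  have vanish: "f V j = 0" if "V \<in> D" "unit_vec j \<notin> V" for V j
  proof -
    have "f V \<in> coord_subspace (unit_support V)"
      using f coord[OF \<open>V \<in> D\<close>] \<open>V \<in> D\<close> by (auto simp: is_decomposition_def)
    then show ?thesis
      using that(2) by (simp add: coord_subspace_def unit_support_def)
  qed
  fix U j
  show "f U j = (if U \<in> D then coord_proj (unit_support U) w else 0) j"
  proof (cases "U \<in> D \<and> unit_vec j \<in> U")
    case True
    have "w j = (\<Sum>V\<in>D. f V j)"
      using f by (simp add: is_decomposition_def sum_fun_apply)
    also have "\<dots> = (\<Sum>V\<in>D. if V = U then f U j else 0)"
    proof (rule sum.cong)
      fix V assume "V \<in> D"
      show "f V j = (if V = U then f U j else 0)"
        using vanish[OF \<open>V \<in> D\<close>] unique[of j] True \<open>V \<in> D\<close> by auto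
    qed simp
    also have "\<dots> = f U j"
      using True \<open>finite D\<close> by simp
    finally show ?thesis
      using True by (simp add: coord_proj_def unit_support_def)
  next
    case False
    then show ?thesis
      using f vanish by (auto simp: is_decomposition_def coord_proj_def unit_support_def)
  qed
qed

lemma direct_sum_coord_subspaces:
  fixes D :: "('n::finite \<Rightarrow> 'k::comm_semiring_1) set set"
  assumes "finite D" and unique: "\<And>j. \<exists>!U. U \<in> D \<and> unit_vec j \<in> U"
    and coord: "\<And>U. U \<in> D \<Longrightarrow> U = coord_subspace (unit_support U)"
  shows "direct_sum UNIV D"
  unfolding direct_sum_iff_unique_decomposition
proof (intro conjI ballI \<open>finite D\<close> subset_UNIV)
  fix w :: "'n \<Rightarrow> 'k"
  show "\<exists>!f. is_decomposition D w f"
  proof (rule ex1I)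
    show "is_decomposition D w (\<lambda>U. if U \<in> D then coord_proj (unit_support U) w else 0)"
      by (rule is_decomposition_coord_proj[OF \<open>finite D\<close> unique]) (use coord in blast)
  qed (rule is_decomposition_coord_subspaces_unique[OF \<open>finite D\<close> unique coord])
qed

section \<open>Representations over zero-sum-free semifields\<close>

locale zsf_representation =
  fixes G :: "('g, 'm) monoid_scheme"
    and \<rho> :: "'g \<Rightarrow> ('n::finite \<Rightarrow> 'k::comm_semiring_1) \<Rightarrow> ('n \<Rightarrow> 'k)"
  assumes semifield: "semifield TYPE('k)"
    and zero_sum_free: "zero_sum_free TYPE('k)"
    and representation: "representation G \<rho>"
begin

lemma group: "group G"
  using representation by (simp add: representation_def)

lemma lin_map_rho: "g \<in> carrier G \<Longrightarrow> lin_map (\<rho> g)"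
  using representation by (simp add: representation_def)

lemma rho_mult: "g \<in> carrier G \<Longrightarrow> h \<in> carrier G \<Longrightarrow> \<rho> (g \<otimes>\<^bsub>G\<^esub> h) v = \<rho> g (\<rho> h v)"
  using representation by (simp add: representation_def)

lemma rho_one: "\<rho> \<one>\<^bsub>G\<^esub> v = v"
  using representation by (simp add: representation_def)

lemma rho_inv_cancel: "g \<in> carrier G \<Longrightarrow> \<rho> (inv\<^bsub>G\<^esub> g) (\<rho> g v) = v"
  by (metis group group.inv_closed group.l_inv rho_mult rho_one)

lemma rho_cancel_inv: "g \<in> carrier G \<Longrightarrow> \<rho> g (\<rho> (inv\<^bsub>G\<^esub> g) v) = v"
  by (metis group group.inv_closed group.r_inv rho_mult rho_one)

lemma rho_unit_vec_monomial:
  assumes "g \<in> carrier G"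
  shows "\<exists>k c. c \<noteq> 0 \<and> \<rho> g (unit_vec j) = smult_vec c (unit_vec k)"
  using invertible_lin_map_monomial[OF semifield zero_sum_free lin_map_rho[OF assms]
      lin_map_rho[OF group.inv_closed[OF group assms]] rho_inv_cancel[OF assms] rho_cancel_inv[OF assms]] .

text \<open>Since each \<rho> g is monomial, G acts on the index set 'n through its action on the lines of
  the unit vectors; orbit i is the orbit of i under this action.\<close>

definition orbit :: "'n \<Rightarrow> 'n set" where
  "orbit i = {k. \<exists>g\<in>carrier G. \<exists>c. c \<noteq> 0 \<and> \<rho> g (unit_vec i) = smult_vec c (unit_vec k)}"

lemma self_in_orbit: "i \<in> orbit i"
proof -
  have "\<one>\<^bsub>G\<^esub> \<in> carrier G"
    by (simp add: group.is_monoid[OF group] monoid.one_closed)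
  moreover have "\<rho> \<one>\<^bsub>G\<^esub> (unit_vec i) = smult_vec 1 (unit_vec i)"
    by (simp add: rho_one)
  ultimately show ?thesis
    unfolding orbit_def using one_neq_zero by blast
qed

lemma orbit_sym:
  assumes "k \<in> orbit i"
  shows "i \<in> orbit k"
proof -
  obtain g c where g: "g \<in> carrier G" and "c \<noteq> 0" and gi: "\<rho> g (unit_vec i) = smult_vec c (unit_vec k)"
    using assms unfolding orbit_def by blast
  obtain b where b: "b * c = 1"
    using semifield_inverse[OF semifield \<open>c \<noteq> 0\<close>] by blast
  have lin: "lin_map (\<rho> (inv\<^bsub>G\<^esub> g))"
    by (rule lin_map_rho[OF group.inv_closed[OF group g]])
  have "\<rho> (inv\<^bsub>G\<^esub> g) (unit_vec k) = \<rho> (inv\<^bsub>G\<^esub> g) (smult_vec b (smult_vec c (unit_vec k)))"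
    by (simp add: b)
  also have "\<dots> = smult_vec b (\<rho> (inv\<^bsub>G\<^esub> g) (\<rho> g (unit_vec i)))"
    unfolding gi by (rule lin_map_smult[OF lin])
  also have "\<dots> = smult_vec b (unit_vec i)"
    by (simp only: rho_inv_cancel[OF g])
  finally show ?thesis
    unfolding orbit_def using group.inv_closed[OF group g] b by force
qed

lemma orbit_trans:
  assumes "j \<in> orbit i" and "k \<in> orbit j"
  shows "k \<in> orbit i"
proof -
  obtain g c where g: "g \<in> carrier G" "c \<noteq> 0" "\<rho> g (unit_vec i) = smult_vec c (unit_vec j)"
    using assms(1) unfolding orbit_def by blast
  obtain h d where h: "h \<in> carrier G" "d \<noteq> 0" "\<rho> h (unit_vec j) = smult_vec d (unit_vec k)"
    using assms(2) unfolding orbit_def by blast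
  have "\<rho> (h \<otimes>\<^bsub>G\<^esub> g) (unit_vec i) = smult_vec (c * d) (unit_vec k)"
    using g h by (simp add: rho_mult lin_map_smult[OF lin_map_rho])
  moreover have "h \<otimes>\<^bsub>G\<^esub> g \<in> carrier G"
    using g h group by (simp add: group.is_monoid monoid.m_closed)
  ultimately show ?thesis
    unfolding orbit_def using semifield_mult_neq_zero[OF semifield g(2) h(2)] by blast
qed

lemma orbit_eq: "k \<in> orbit i \<Longrightarrow> orbit k = orbit i"
  using orbit_sym orbit_trans by blast

definition orbit_closed :: "'n set \<Rightarrow> bool" where
  "orbit_closed S \<longleftrightarrow> (\<forall>i\<in>S. orbit i \<subseteq> S)"

lemma orbit_closed_orbit: "orbit_closed (orbit i)"
  unfolding orbit_closed_def using orbit_trans by blast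

lemma orbit_closed_Diff_orbit:
  assumes "orbit_closed S"
  shows "orbit_closed (S - orbit i)"
  unfolding orbit_closed_def
proof (intro ballI subsetI)
  fix j k assume j: "j \<in> S - orbit i" and "k \<in> orbit j"
  then have "k \<in> S"
    using assms unfolding orbit_closed_def by blast
  moreover have "k \<notin> orbit i"
    using j orbit_eq[OF \<open>k \<in> orbit j\<close>] orbit_sym[OF \<open>k \<in> orbit j\<close>] orbit_trans by blast
  ultimately show "k \<in> S - orbit i"
    by blast
qed

lemma subrep_coord_subspace:
  assumes "orbit_closed S"
  shows "subrep G \<rho> (coord_subspace S)"
  unfolding subrep_def G_stable_def
proof (intro conjI ballI submodule_coord_subspace)
  fix g assume g: "g \<in> carrier G"
  show "\<rho> g ` coord_subspace S \<subseteq> coord_subspace S"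
  proof (rule lin_map_image_coord_subspace[OF lin_map_rho[OF g] submodule_coord_subspace])
    fix j assume "j \<in> S"
    obtain k c where "c \<noteq> 0" and gj: "\<rho> g (unit_vec j) = smult_vec c (unit_vec k)"
      using rho_unit_vec_monomial[OF g] by blast
    then have "k \<in> S"
      using assms \<open>j \<in> S\<close> g unfolding orbit_closed_def orbit_def by blast
    then show "\<rho> g (unit_vec j) \<in> coord_subspace S"
      unfolding gj by (simp add: submodule_smult[OF submodule_coord_subspace])
  qed
qed

lemma subrep_unit_vec_orbit:
  assumes "subrep G \<rho> W" and "unit_vec i \<in> W" and "k \<in> orbit i"
  shows "unit_vec k \<in> W"
proof -
  obtain g c where g: "g \<in> carrier G" and "c \<noteq> 0" and gi: "\<rho> g (unit_vec i) = smult_vec c (unit_vec k)"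
    using assms(3) unfolding orbit_def by blast
  have "submodule W" and "\<rho> g (unit_vec i) \<in> W"
    using assms(1,2) g unfolding subrep_def G_stable_def by blast+
  then show ?thesis
    using submodule_smult_cancel[OF semifield _ \<open>c \<noteq> 0\<close>] gi by metis
qed

lemma orbit_closed_unit_support: "subrep G \<rho> W \<Longrightarrow> orbit_closed (unit_support W)"
  unfolding orbit_closed_def unit_support_def using subrep_unit_vec_orbit by blast

lemma coord_subspace_orbit_subset_subrep:
  assumes "subrep G \<rho> W" and "unit_vec i \<in> W"
  shows "coord_subspace (orbit i) \<subseteq> W"
  using assms coord_subspace_subset_submodule subrep_unit_vec_orbit by (metis subrep_def)

lemma coord_subspace_neq_zero: "i \<in> S \<Longrightarrow> coord_subspace S \<noteq> {0 :: 'n \<Rightarrow> 'k}"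
  using unit_vec_in_coord_subspace_iff unit_vec_neq_zero by (metis singletonD)

lemma indecomposable_coord_subspace_imp_orbit:
  assumes "orbit_closed S" and indec: "indecomposable G \<rho> (coord_subspace S)"
  shows "\<exists>i. S = orbit i"
proof -
  have "S \<noteq> {}"
    using indec coord_subspace_empty by (auto simp: indecomposable_def)
  then obtain i where "i \<in> S"
    by blast
  then have "orbit i \<subseteq> S"
    using assms(1) unfolding orbit_closed_def by blast
  show ?thesis
  proof (intro exI, rule ccontr)
    assume "S \<noteq> orbit i"
    then obtain k where "k \<in> S - orbit i"
      using \<open>orbit i \<subseteq> S\<close> by blast
    have "direct_sum2 (coord_subspace S) (coord_subspace (orbit i)) (coord_subspace (S - orbit i))"
      using direct_sum2_coord_subspace[of "orbit i" "S - orbit i"] \<open>orbit i \<subseteq> S\<close>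
      by (simp add: Un_absorb1)
    moreover have "subrep G \<rho> (coord_subspace (orbit i))" "subrep G \<rho> (coord_subspace (S - orbit i))"
      using subrep_coord_subspace orbit_closed_orbit orbit_closed_Diff_orbit[OF assms(1)] by blast+
    moreover have "coord_subspace (orbit i) \<noteq> {0 :: 'n \<Rightarrow> 'k}" "coord_subspace (S - orbit i) \<noteq> {0 :: 'n \<Rightarrow> 'k}"
      using coord_subspace_neq_zero self_in_orbit \<open>k \<in> S - orbit i\<close> by blast+
    ultimately show False
      using indec unfolding indecomposable_def by blast
  qed
qed

text \<open>In a splitting of the coordinate subspace of an orbit, the summand containing e_i contains the
  whole orbit subspace, which leaves nothing for the other summand.\<close>

lemma indecomposable_coord_subspace_orbit: "indecomposable G \<rho> (coord_subspace (orbit i))"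
  unfolding indecomposable_def
proof (rule conjI)
  show "coord_subspace (orbit i) \<noteq> {0 :: 'n \<Rightarrow> 'k}"
    by (rule coord_subspace_neq_zero[OF self_in_orbit])
  show "\<not> (\<exists>W1 W2. subrep G \<rho> W1 \<and> subrep G \<rho> W2 \<and> W1 \<noteq> {0} \<and> W2 \<noteq> {0} \<and>
    direct_sum2 (coord_subspace (orbit i)) W1 W2)"
  proof
    assume "\<exists>W1 W2. subrep G \<rho> W1 \<and> subrep G \<rho> W2 \<and> W1 \<noteq> {0} \<and> W2 \<noteq> {0} \<and>
      direct_sum2 (coord_subspace (orbit i)) W1 W2"
    then obtain W1 W2 where W: "subrep G \<rho> W1" "subrep G \<rho> W2" "W1 \<noteq> {0}" "W2 \<noteq> {0}"
      and ds: "direct_sum2 (coord_subspace (orbit i)) W1 W2"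
      by blast
    have sub: "submodule W1" "submodule W2"
      using W(1,2) by (simp_all add: subrep_def)
    have inter: "x = 0" if "x \<in> W1" "x \<in> W2" for x
      by (rule direct_sum2_inter[OF ds sub that])
    have "W1 \<subseteq> coord_subspace (orbit i)" "W2 \<subseteq> coord_subspace (orbit i)"
      using ds by (simp_all add: direct_sum2_def)
    have absorb: "W' \<subseteq> {0}"
      if "subrep G \<rho> W" "unit_vec i \<in> W" "W' \<subseteq> coord_subspace (orbit i)"
        and "\<And>x. x \<in> W \<Longrightarrow> x \<in> W' \<Longrightarrow> x = 0" for W W'
      using coord_subspace_orbit_subset_subrep[OF that(1,2)] that(3,4) by blast
    have "unit_vec i \<in> W1 \<or> unit_vec i \<in> W2"
      by (rule direct_sum2_unit_vec[OF semifield zero_sum_free ds sub]) (simp add: self_in_orbit)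
    then show False
    proof
      assume "unit_vec i \<in> W1"
      then have "W2 \<subseteq> {0}"
        using absorb[OF W(1) _ \<open>W2 \<subseteq> coord_subspace (orbit i)\<close>] inter by blast
      then show False
        using W(4) submodule_zero[OF sub(2)] by blast
    next
      assume "unit_vec i \<in> W2"
      then have "W1 \<subseteq> {0}"
        using absorb[OF W(2) _ \<open>W1 \<subseteq> coord_subspace (orbit i)\<close>] inter by blast
      then show False
        using W(3) submodule_zero[OF sub(1)] by blast
    qed
  qed
qed

lemma indecomposable_coord_subspace_iff:
  assumes "orbit_closed S"
  shows "indecomposable G \<rho> (coord_subspace S) \<longleftrightarrow> (\<exists>i. S = orbit i)"
  using indecomposable_coord_subspace_imp_orbit[OF assms] indecomposable_coord_subspace_orbit by blast

lemma rho_image_line_unit_vec_iff: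
  assumes "g \<in> carrier G"
  shows "\<rho> g ` line (unit_vec i) = line (unit_vec k) \<longleftrightarrow>
    (\<exists>c. c \<noteq> 0 \<and> \<rho> g (unit_vec i) = smult_vec c (unit_vec k))"
proof
  assume "\<rho> g ` line (unit_vec i) = line (unit_vec k)"
  then have "\<rho> g (unit_vec i) \<in> line (unit_vec k)"
    using in_line_self by blast
  then obtain c where c: "\<rho> g (unit_vec i) = smult_vec c (unit_vec k)"
    unfolding line_def by blast
  have "\<rho> g (unit_vec i) \<noteq> 0"
    using rho_inv_cancel[OF assms, of "unit_vec i"] lin_map_zero[OF lin_map_rho[OF group.inv_closed[OF group assms]]]
      unit_vec_neq_zero by metis
  then have "c \<noteq> 0"
    using c by auto
  then show "\<exists>c. c \<noteq> 0 \<and> \<rho> g (unit_vec i) = smult_vec c (unit_vec k)"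
    using c by blast
next
  assume "\<exists>c. c \<noteq> 0 \<and> \<rho> g (unit_vec i) = smult_vec c (unit_vec k)"
  then show "\<rho> g ` line (unit_vec i) = line (unit_vec k)"
    using line_image[OF lin_map_rho[OF assms]] line_smult[OF semifield] by metis
qed

lemma transitive_on_basis_lines_iff: "transitive_on_basis_lines G \<rho> \<longleftrightarrow> (\<forall>i k. k \<in> orbit i)"
  unfolding transitive_on_basis_lines_def basis_lines_unit_vec[OF semifield zero_sum_free] orbit_def
  using rho_image_line_unit_vec_iff by auto

lemma indecomposable_iff_transitive_on_basis_lines:
  "indecomposable G \<rho> UNIV \<longleftrightarrow> transitive_on_basis_lines G \<rho>"
proof -
  have "indecomposable G \<rho> UNIV \<longleftrightarrow> (\<exists>i. UNIV = orbit i)"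
    using indecomposable_coord_subspace_iff[of UNIV] by (simp add: orbit_closed_def)
  also have "\<dots> \<longleftrightarrow> (\<forall>i k. k \<in> orbit i)"
    using orbit_eq by (metis UNIV_I UNIV_eq_I)
  finally show ?thesis
    by (simp add: transitive_on_basis_lines_iff)
qed

definition orbit_decomposition :: "('n \<Rightarrow> 'k) set set" where
  "orbit_decomposition = range (\<lambda>i. coord_subspace (orbit i))"

lemma unit_vec_in_unique_orbit_summand: "\<exists>!U. U \<in> orbit_decomposition \<and> unit_vec j \<in> U"
proof (rule ex1I[of _ "coord_subspace (orbit j)"])
  show "coord_subspace (orbit j) \<in> orbit_decomposition \<and> unit_vec j \<in> coord_subspace (orbit j)"
    by (simp add: orbit_decomposition_def self_in_orbit)
next
  fix U assume "U \<in> orbit_decomposition \<and> unit_vec j \<in> U"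
  then obtain i where "U = coord_subspace (orbit i)" "j \<in> orbit i"
    unfolding orbit_decomposition_def by auto
  then show "U = coord_subspace (orbit j)"
    using orbit_eq by simp
qed

lemma orbit_decomposition_is_decomposition:
  "direct_sum UNIV orbit_decomposition \<and>
    (\<forall>W\<in>orbit_decomposition. subrep G \<rho> W \<and> free_submodule W \<and> indecomposable G \<rho> W)"
proof (intro conjI ballI)
  show "direct_sum UNIV orbit_decomposition"
    by (rule direct_sum_coord_subspaces[OF _ unit_vec_in_unique_orbit_summand])
      (auto simp: orbit_decomposition_def)
next
  fix W assume "W \<in> orbit_decomposition"
  then obtain i where W: "W = coord_subspace (orbit i)"
    unfolding orbit_decomposition_def by blast
  show "subrep G \<rho> W"
    unfolding W by (rule subrep_coord_subspace[OF orbit_closed_orbit])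
  show "free_submodule W"
    unfolding W by (rule free_submodule_coord_subspace)
  show "indecomposable G \<rho> W"
    unfolding W by (rule indecomposable_coord_subspace_orbit)
qed

lemma decomposition_eq_orbit_decomposition:
  assumes ds: "direct_sum UNIV D" and D: "\<forall>W\<in>D. subrep G \<rho> W \<and> indecomposable G \<rho> W"
  shows "D = orbit_decomposition"
proof -
  have sub: "\<forall>U\<in>D. submodule U"
    using D by (simp add: subrep_def)
  have orbit_summand: "\<exists>i. U = coord_subspace (orbit i)" if "U \<in> D" for U
  proof -
    have U: "U = coord_subspace (unit_support U)"
      by (rule direct_sum_UNIV_summand_eq_coord_subspace[OF semifield zero_sum_free ds sub that])
    have "subrep G \<rho> U" and "indecomposable G \<rho> U"
      using D that by blast+
    then have "indecomposable G \<rho> (coord_subspace (unit_support U))"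
      by (simp only: U[symmetric])
    then obtain i where "unit_support U = orbit i"
      using indecomposable_coord_subspace_imp_orbit[OF orbit_closed_unit_support[OF \<open>subrep G \<rho> U\<close>]] by blast
    then show ?thesis
      using U by metis
  qed
  show ?thesis
  proof
    show "D \<subseteq> orbit_decomposition"
      using orbit_summand unfolding orbit_decomposition_def by blast
  next
    show "orbit_decomposition \<subseteq> D"
    proof
      fix V assume "V \<in> orbit_decomposition"
      then obtain i where V: "V = coord_subspace (orbit i)"
        unfolding orbit_decomposition_def by blast
      obtain U where "U \<in> D" and "unit_vec i \<in> U"
        using direct_sum_UNIV_unit_vec_unique[OF semifield zero_sum_free ds sub, of i] by blast
      moreover obtain j where U: "U = coord_subspace (orbit j)"
        using orbit_summand[OF \<open>U \<in> D\<close>] by blast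
      ultimately have "orbit i = orbit j"
        using orbit_eq by simp
      then show "V \<in> D"
        using V U \<open>U \<in> D\<close> by simp
    qed
  qed
qed

end

theorem proposition3p10:
  fixes G :: "('g, 'm) monoid_scheme"
    and \<rho> :: "'g \<Rightarrow> ('n::finite \<Rightarrow> 'k::comm_semiring_1) \<Rightarrow> ('n \<Rightarrow> 'k)"
  assumes "semifield TYPE('k)"
    and "zero_sum_free TYPE('k)"
    and "representation G \<rho>"
  shows "(indecomposable G \<rho> UNIV \<longleftrightarrow> transitive_on_basis_lines G \<rho>) \<and>
         (\<exists>!D. direct_sum UNIV D \<and>
               (\<forall>W\<in>D. subrep G \<rho> W \<and> free_submodule W \<and> indecomposable G \<rho> W))"
proof -
  interpret zsf_representation G \<rho>
    using assms by unfold_locales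
  have "\<exists>!D. direct_sum UNIV D \<and> (\<forall>W\<in>D. subrep G \<rho> W \<and> free_submodule W \<and> indecomposable G \<rho> W)"
  proof (rule ex1I[of _ orbit_decomposition])
    fix D assume "direct_sum UNIV D \<and> (\<forall>W\<in>D. subrep G \<rho> W \<and> free_submodule W \<and> indecomposable G \<rho> W)"
    then show "D = orbit_decomposition"
      using decomposition_eq_orbit_decomposition by blast
  qed (rule orbit_decomposition_is_decomposition)
  then show ?thesis
    using indecomposable_iff_transitive_on_basis_lines by blast
qed

end
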